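(* Let $G$ be a maximal outerplanar graph with at least three vertices. Then $\mathrm{fall}(G)=\{3\}$.
   Context: For a graph $G=(V,E)$ and a partition $\Pi=\{V_1,\dots,V_k\}$ of $V$, a vertex $v\in V_i$ is colorful if $v$ is adjacent to at least one vertex of each class $V_j$ with $j\neq i$. $\Pi$ is a fall $k$-coloring if every $V_i$ is an independent set and every vertex is colorful; equivalently, $V$ is partitioned into $k$ independent dominating sets. The fall set $\mathrm{fall}(G)$ is the set of all integers $k$ such that $G$ admits a fall $k$-coloring. *)

theory Defs
  imports Main
begin

definition simple_graph :: "'a set \<Rightarrow> ('a \<Rightarrow> 'a \<Rightarrow> bool) \<Rightarrow> bool" where
  "simple_graph V E \<longleftrightarrow> finite V \<and>
     (\<forall>u v. E u v \<longrightarrow> u \<in> V \<and> v \<in> V \<and> u \<noteq> v \<and> E v u)"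

text \<open>Outerplanar: the graph has a drawing with all vertices on a circle (outer face)
  and edges as pairwise non-crossing chords; combinatorially, a cyclic ordering of the
  vertices in which no two edges interleave.\<close>
definition outerplanar :: "'a set \<Rightarrow> ('a \<Rightarrow> 'a \<Rightarrow> bool) \<Rightarrow> bool" where
  "outerplanar V E \<longleftrightarrow> (\<exists>f :: 'a \<Rightarrow> nat. bij_betw f V {0..<card V} \<and>
     (\<forall>a\<in>V. \<forall>b\<in>V. \<forall>c\<in>V. \<forall>d\<in>V.
        E a b \<and> E c d \<longrightarrow> \<not> (f a < f c \<and> f c < f b \<and> f b < f d)))"

definition add_edge :: "('a \<Rightarrow> 'a \<Rightarrow> bool) \<Rightarrow> 'a \<Rightarrow> 'a \<Rightarrow> ('a \<Rightarrow> 'a \<Rightarrow> bool)" where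
  "add_edge E u v = (\<lambda>x y. E x y \<or> (x = u \<and> y = v) \<or> (x = v \<and> y = u))"

definition maximal_outerplanar :: "'a set \<Rightarrow> ('a \<Rightarrow> 'a \<Rightarrow> bool) \<Rightarrow> bool" where
  "maximal_outerplanar V E \<longleftrightarrow> simple_graph V E \<and> outerplanar V E \<and>
     (\<forall>u\<in>V. \<forall>v\<in>V. u \<noteq> v \<and> \<not> E u v \<longrightarrow> \<not> outerplanar V (add_edge E u v))"

definition fall_coloring :: "'a set \<Rightarrow> ('a \<Rightarrow> 'a \<Rightarrow> bool) \<Rightarrow> 'a set set \<Rightarrow> nat \<Rightarrow> bool" where
  "fall_coloring V E P k \<longleftrightarrow>
     \<Union>P = V \<and> {} \<notin> P \<and> (\<forall>X\<in>P. \<forall>Y\<in>P. X \<noteq> Y \<longrightarrow> X \<inter> Y = {}) \<and>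
     finite P \<and> card P = k \<and>
     (\<forall>X\<in>P. \<forall>u\<in>X. \<forall>v\<in>X. \<not> E u v) \<and>
     (\<forall>X\<in>P. \<forall>v\<in>X. \<forall>Y\<in>P. Y \<noteq> X \<longrightarrow> (\<exists>u\<in>Y. E v u))"

definition fall_set :: "'a set \<Rightarrow> ('a \<Rightarrow> 'a \<Rightarrow> bool) \<Rightarrow> nat set" where
  "fall_set V E = {k. \<exists>P. fall_coloring V E P k}"

end

theory Submission
  imports Defs
begin

text \<open>Fix a cyclic order of V witnessing outerplanarity. Maximality forces every chord that
  no edge crosses to be an edge. Among the edges whose span (in the order) contains a vertex,
  take one of minimal span and a vertex w inside it: every neighbour of w is then adjacent
  to w in the order, so w has degree 2 and its two neighbours are adjacent. Such an ear
  w forms a triangle, so every fall coloring has at least 3 classes, and w is colorful,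
  so at most 3. Deleting w leaves a maximal outerplanar graph, and by induction there is
  a proper 3-coloring in which every vertex sees both other colors; w gets the color
  missing at its two neighbours. Its color classes form a fall 3-coloring.\<close>

definition noncrossing :: "'a set \<Rightarrow> ('a \<Rightarrow> 'a \<Rightarrow> bool) \<Rightarrow> ('a \<Rightarrow> nat) \<Rightarrow> bool" where
  "noncrossing V E f \<longleftrightarrow> (\<forall>a\<in>V. \<forall>b\<in>V. \<forall>c\<in>V. \<forall>d\<in>V.
     E a b \<and> E c d \<longrightarrow> \<not> (f a < f c \<and> f c < f b \<and> f b < f d))"

definition strictly_between :: "('a \<Rightarrow> nat) \<Rightarrow> 'a \<Rightarrow> 'a \<Rightarrow> 'a \<Rightarrow> bool" where
  "strictly_between f x y z \<longleftrightarrow> f x < f y \<and> f y < f z \<or> f z < f y \<and> f y < f x"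

definition remove_vertex :: "('a \<Rightarrow> 'a \<Rightarrow> bool) \<Rightarrow> 'a \<Rightarrow> 'a \<Rightarrow> 'a \<Rightarrow> bool" where
  "remove_vertex E w = (\<lambda>x y. E x y \<and> x \<noteq> w \<and> y \<noteq> w)"

definition colorful_coloring :: "'a set \<Rightarrow> ('a \<Rightarrow> 'a \<Rightarrow> bool) \<Rightarrow> nat \<Rightarrow> ('a \<Rightarrow> nat) \<Rightarrow> bool" where
  "colorful_coloring V E k col \<longleftrightarrow> (\<forall>v\<in>V. col v < k) \<and> (\<forall>u v. E u v \<longrightarrow> col u \<noteq> col v) \<and>
     (\<forall>v\<in>V. \<forall>i<k. i \<noteq> col v \<longrightarrow> (\<exists>u. E v u \<and> col u = i))"

lemma fall_coloringD:
  assumes "fall_coloring V E P k"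
  shows "\<Union>P = V" "finite P" "card P = k"
    and "\<And>X Y. X \<in> P \<Longrightarrow> Y \<in> P \<Longrightarrow> X \<noteq> Y \<Longrightarrow> X \<inter> Y = {}"
    and "\<And>X u v. X \<in> P \<Longrightarrow> u \<in> X \<Longrightarrow> v \<in> X \<Longrightarrow> \<not> E u v"
    and "\<And>X v Y. X \<in> P \<Longrightarrow> v \<in> X \<Longrightarrow> Y \<in> P \<Longrightarrow> Y \<noteq> X \<Longrightarrow> \<exists>u\<in>Y. E v u"
  using assms unfolding fall_coloring_def by simp_all

lemma fall_coloring_classes:
  assumes "fall_coloring V E P k"
  obtains cls where "\<And>x. x \<in> V \<Longrightarrow> cls x \<in> P \<and> x \<in> cls x"
    and "\<And>x X. X \<in> P \<Longrightarrow> x \<in> X \<Longrightarrow> cls x = X"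
proof -
  note cover = fall_coloringD(1)[OF assms] and disjoint = fall_coloringD(4)[OF assms]
  define cls where "cls x = (SOME X. X \<in> P \<and> x \<in> X)" for x
  have cls: "cls x \<in> P \<and> x \<in> cls x" if "x \<in> V" for x
  proof -
    from that cover have "\<exists>X. X \<in> P \<and> x \<in> X" by auto
    then show ?thesis unfolding cls_def by (rule someI_ex)
  qed
  have "cls x = X" if "X \<in> P" "x \<in> X" for x X
  proof -
    from that cover have "cls x \<in> P" "x \<in> cls x" using cls by auto
    with that disjoint[of X "cls x"] show ?thesis by auto
  qed
  with cls show thesis by (rule that)
qed

lemma fall_coloring_clique_card_le:
  assumes coloring: "fall_coloring V E P k" and "K \<subseteq> V"
    and clique: "\<And>x y. x \<in> K \<Longrightarrow> y \<in> K \<Longrightarrow> x \<noteq> y \<Longrightarrow> E x y"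
  shows "card K \<le> k"
proof -
  obtain cls where cls: "\<And>x. x \<in> V \<Longrightarrow> cls x \<in> P \<and> x \<in> cls x"
    using fall_coloring_classes[OF coloring] by metis
  have "inj_on cls K"
  proof (rule inj_onI)
    fix x y assume "x \<in> K" "y \<in> K" "cls x = cls y"
    with cls[of x] cls[of y] \<open>K \<subseteq> V\<close> have "\<not> E x y"
      by (intro fall_coloringD(5)[OF coloring, of "cls x"]) auto
    with clique \<open>x \<in> K\<close> \<open>y \<in> K\<close> show "x = y" by blast
  qed
  moreover have "cls ` K \<subseteq> P" using cls \<open>K \<subseteq> V\<close> by auto
  ultimately show ?thesis
    using card_inj_on_le[of cls K P] fall_coloringD(2,3)[OF coloring] by simp
qed

lemma fall_coloring_le_Suc_degree:
  assumes coloring: "fall_coloring V E P k" and "simple_graph V E" "w \<in> V"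
  shows "k \<le> Suc (card {x. E w x})"
proof -
  obtain cls where cls: "\<And>x. x \<in> V \<Longrightarrow> cls x \<in> P \<and> x \<in> cls x"
    and unique: "\<And>x X. X \<in> P \<Longrightarrow> x \<in> X \<Longrightarrow> cls x = X"
    using fall_coloring_classes[OF coloring] by metis
  have "finite {x. E w x}"
    using \<open>simple_graph V E\<close> unfolding simple_graph_def by (auto intro: finite_subset)
  have "P - {cls w} \<subseteq> cls ` {x. E w x}"
  proof
    fix Y assume "Y \<in> P - {cls w}"
    with fall_coloringD(6)[OF coloring] cls[OF \<open>w \<in> V\<close>] obtain u where "u \<in> Y" "E w u"
      by blast
    with unique \<open>Y \<in> P - {cls w}\<close> show "Y \<in> cls ` {x. E w x}" by blast
  qed
  then have "card (P - {cls w}) \<le> card {x. E w x}"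
    using \<open>finite {x. E w x}\<close> by (meson card_image_le card_mono finite_imageI order_trans)
  moreover have "card (P - {cls w}) = k - 1"
    using fall_coloringD(2,3)[OF coloring] cls[OF \<open>w \<in> V\<close>] by simp
  ultimately show ?thesis by simp
qed

lemma fall_coloring_of_colorful_coloring:
  assumes "simple_graph V E" "V \<noteq> {}" and col: "colorful_coloring V E k col"
  shows "fall_coloring V E ((\<lambda>i. {v \<in> V. col v = i}) ` {..<k}) k"
proof -
  let ?class = "\<lambda>i. {v \<in> V. col v = i}"
  have in_V: "v \<in> V" if "E u v" for u v
    using assms(1) that unfolding simple_graph_def by blast
  have proper: "col u \<noteq> col v" if "E u v" for u v
    using col that unfolding colorful_coloring_def by blast
  have sees: "\<exists>u. E v u \<and> col u = i" if "v \<in> V" "i < k" "i \<noteq> col v" for v i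
    using col that unfolding colorful_coloring_def by blast
  have nonempty: "?class i \<noteq> {}" if "i < k" for i
  proof -
    obtain v where "v \<in> V" using \<open>V \<noteq> {}\<close> by blast
    with sees[OF \<open>v \<in> V\<close> \<open>i < k\<close>] in_V show ?thesis by (cases "col v = i") blast+
  qed
  then have "inj_on ?class {..<k}" by (intro inj_onI) blast
  show ?thesis
    unfolding fall_coloring_def
  proof (intro conjI)
    show "\<Union> (?class ` {..<k}) = V" using col unfolding colorful_coloring_def by auto
    show "{} \<notin> ?class ` {..<k}" using nonempty by auto
    show "card (?class ` {..<k}) = k" using \<open>inj_on ?class {..<k}\<close> by (simp add: card_image)
    show "\<forall>X\<in>?class ` {..<k}. \<forall>u\<in>X. \<forall>v\<in>X. \<not> E u v"
      using proper by fastforce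
    show "\<forall>X\<in>?class ` {..<k}. \<forall>v\<in>X. \<forall>Y\<in>?class ` {..<k}. Y \<noteq> X \<longrightarrow> (\<exists>u\<in>Y. E v u)"
      using sees in_V by fastforce
  qed auto
qed

lemma fall_coloring_card_ear:
  assumes coloring: "fall_coloring V E P k" and "simple_graph V E" "w \<in> V"
    and "E w p" "E w q" "E p q" and neighbours: "\<And>x. E w x \<Longrightarrow> x = p \<or> x = q"
  shows "k = 3"
proof (rule antisym)
  have "card {x. E w x} \<le> card {p, q}"
    using neighbours by (intro card_mono) auto
  also have "\<dots> \<le> 2" by (simp add: card_insert_le_m1)
  finally show "k \<le> 3"
    using fall_coloring_le_Suc_degree[OF coloring \<open>simple_graph V E\<close> \<open>w \<in> V\<close>] by simp
  have sym: "E x y \<Longrightarrow> E y x" and in_V: "E x y \<Longrightarrow> y \<in> V" and neq: "E x y \<Longrightarrow> x \<noteq> y" for x y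
    using \<open>simple_graph V E\<close> unfolding simple_graph_def by blast+
  have "card {w, p, q} = 3"
    using \<open>E w p\<close> \<open>E w q\<close> \<open>E p q\<close> neq by auto
  moreover have "card {w, p, q} \<le> k"
  proof (rule fall_coloring_clique_card_le[OF coloring])
    show "{w, p, q} \<subseteq> V" using \<open>w \<in> V\<close> \<open>E w p\<close> \<open>E w q\<close> in_V by blast
    show "E x y" if "x \<in> {w, p, q}" "y \<in> {w, p, q}" "x \<noteq> y" for x y
      using that \<open>E w p\<close> \<open>E w q\<close> \<open>E p q\<close> sym by blast
  qed
  ultimately show "3 \<le> k" by simp
qed

lemma third_color:
  fixes a b :: nat
  assumes "a < 3" "b < 3" "a \<noteq> b"
  shows "3 - a - b < 3" "3 - a - b \<noteq> a" "3 - a - b \<noteq> b" "\<And>i. i < 3 \<Longrightarrow> i \<in> {a, b, 3 - a - b}"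
  using assms by (auto simp: numeral_3_eq_3 less_Suc_eq)

lemma colorful_coloring_triangle:
  assumes "simple_graph V E" "V = {w, p, q}" "E w p" "E w q" "E p q"
  shows "\<exists>col. colorful_coloring V E 3 col"
proof -
  have "w \<noteq> p" "w \<noteq> q" "p \<noteq> q" "E p w" "E q w" "E q p"
    using assms unfolding simple_graph_def by blast+
  then have "colorful_coloring V E 3 (\<lambda>x. if x = p then 0 else if x = q then 1 else 2)"
    using assms unfolding colorful_coloring_def simple_graph_def
    by (auto simp: less_Suc_eq numeral_eq_Suc)
  then show ?thesis by blast
qed

lemma colorful_coloring_add_ear:
  assumes "simple_graph V E" "w \<in> V" "E w p" "E w q" and neighbours: "\<And>x. E w x \<Longrightarrow> x = p \<or> x = q"
    and col: "colorful_coloring (V - {w}) (remove_vertex E w) 3 col" and "col p \<noteq> col q"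
  shows "colorful_coloring V E 3 (col(w := 3 - col p - col q))"
proof -
  have "p \<in> V - {w}" "q \<in> V - {w}" "p \<noteq> w" "q \<noteq> w"
    using assms(1,3,4) unfolding simple_graph_def by blast+
  then have "col p < 3" "col q < 3" using col unfolding colorful_coloring_def by auto
  note third = third_color[OF this \<open>col p \<noteq> col q\<close>]
  have sym: "E x y \<Longrightarrow> E y x" for x y using assms(1) unfolding simple_graph_def by blast
  show ?thesis
    unfolding colorful_coloring_def
  proof (intro conjI ballI allI impI)
    fix v assume "v \<in> V"
    then show "(col(w := 3 - col p - col q)) v < 3"
      using col third unfolding colorful_coloring_def by auto
  next
    fix u v assume "E u v"
    then show "(col(w := 3 - col p - col q)) u \<noteq> (col(w := 3 - col p - col q)) v"
      using col third neighbours sym \<open>p \<noteq> w\<close> \<open>q \<noteq> w\<close>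
      unfolding colorful_coloring_def remove_vertex_def by (metis fun_upd_apply)
  next
    fix v i assume "v \<in> V" "i < 3" "i \<noteq> (col(w := 3 - col p - col q)) v"
    show "\<exists>u. E v u \<and> (col(w := 3 - col p - col q)) u = i"
    proof (cases "v = w")
      case True
      then show ?thesis
        using third(4)[OF \<open>i < 3\<close>] \<open>i \<noteq> _\<close> \<open>E w p\<close> \<open>E w q\<close> \<open>p \<noteq> w\<close> \<open>q \<noteq> w\<close> by auto
    next
      case False
      with col \<open>v \<in> V\<close> \<open>i < 3\<close> \<open>i \<noteq> _\<close> obtain u where "remove_vertex E w v u" "col u = i"
        unfolding colorful_coloring_def by (metis Diff_iff fun_upd_other singletonD)
      then show ?thesis unfolding remove_vertex_def by auto
    qed
  qed
qed

lemma outerplanar_iff_noncrossing: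
  "outerplanar V E \<longleftrightarrow> (\<exists>f. bij_betw f V {0..<card V} \<and> noncrossing V E f)"
  unfolding outerplanar_def noncrossing_def ..

text \<open>The order f stands for the cyclic order of the outer face. It is only required to be
  injective, not onto an initial segment, and maximality is relative to this fixed order,
  so that both properties survive the deletion of a vertex.\<close>
locale maximal_outerplanar_order =
  fixes V :: "'a set" and E :: "'a \<Rightarrow> 'a \<Rightarrow> bool" and f :: "'a \<Rightarrow> nat"
  assumes simple: "simple_graph V E"
    and inj: "inj_on f V"
    and noncrossing: "noncrossing V E f"
    and saturated: "\<And>u v. \<lbrakk>u \<in> V; v \<in> V; u \<noteq> v; \<not> E u v\<rbrakk> \<Longrightarrow> \<not> noncrossing V (add_edge E u v) f"

lemma maximal_outerplanar_order_exists:
  assumes "maximal_outerplanar V E"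
  obtains f where "maximal_outerplanar_order V E f"
proof -
  from assms obtain f where bij: "bij_betw f V {0..<card V}" and "noncrossing V E f"
    unfolding maximal_outerplanar_def outerplanar_iff_noncrossing by blast
  moreover have "\<not> noncrossing V (add_edge E u v) f" if "u \<in> V" "v \<in> V" "u \<noteq> v" "\<not> E u v" for u v
    using assms that bij unfolding maximal_outerplanar_def outerplanar_iff_noncrossing by blast
  ultimately have "maximal_outerplanar_order V E f"
    using assms bij_betw_imp_inj_on
    by unfold_locales (auto simp: maximal_outerplanar_def)
  then show thesis by (rule that)
qed

context maximal_outerplanar_order
begin

lemma finite: "finite V"
  using simple by (simp add: simple_graph_def)

lemma edge_sym: "E u v \<Longrightarrow> E v u"
  and edge_vertices: "E u v \<Longrightarrow> u \<in> V \<and> v \<in> V"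
  and edge_neq: "E u v \<Longrightarrow> u \<noteq> v"
  using simple by (auto simp: simple_graph_def)

lemma f_eq_iff: "u \<in> V \<Longrightarrow> v \<in> V \<Longrightarrow> f u = f v \<longleftrightarrow> u = v"
  using inj by (auto dest: inj_onD)

lemma edge_from_interior:
  assumes "E a b" "E y z" "f a < f y" "f y < f b"
  shows "f a \<le> f z \<and> f z \<le> f b"
  using noncrossing assms edge_sym[of a b] edge_sym[of y z] edge_vertices[OF \<open>E a b\<close>] edge_vertices[OF \<open>E y z\<close>]
  unfolding noncrossing_def by (metis not_le)

lemma edge_if_uncrossed:
  assumes "u \<in> V" "v \<in> V" "f u < f v"
    and inside: "\<And>y z. E y z \<Longrightarrow> f u < f y \<Longrightarrow> f y < f v \<Longrightarrow> f u \<le> f z \<and> f z \<le> f v"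
  shows "E u v"
proof (rule ccontr)
  assume "\<not> E u v"
  with saturated assms(1-3) obtain a b c d where "a \<in> V" "b \<in> V" "c \<in> V" "d \<in> V"
    and ab: "add_edge E u v a b" and cd: "add_edge E u v c d"
    and order: "f a < f c" "f c < f b" "f b < f d"
    unfolding noncrossing_def by (metis less_irrefl)
  have new: "x = u \<and> y = v" if "add_edge E u v x y" "\<not> E x y" "f x < f y" for x y
    using that \<open>f u < f v\<close> unfolding add_edge_def by auto
  show False
  proof (cases "E a b")
    case True
    show False
    proof (cases "E c d")
      case True
      with \<open>E a b\<close> show False
        using noncrossing \<open>a \<in> V\<close> \<open>b \<in> V\<close> \<open>c \<in> V\<close> \<open>d \<in> V\<close> order unfolding noncrossing_def by blast
    next
      case False
      with cd order have "c = u" "d = v" using new by auto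
      with inside[OF edge_sym[OF \<open>E a b\<close>]] order show False by auto
    qed
  next
    case False
    with ab order have "a = u" "b = v" using new by auto
    show False
    proof (cases "E c d")
      case True
      with inside \<open>a = u\<close> \<open>b = v\<close> order show False by fastforce
    next
      case False
      with cd order have "c = u" using new by auto
      with \<open>a = u\<close> order show False by simp
    qed
  qed
qed

lemma enclosing_edge_exists:
  assumes "card V \<ge> 3"
  obtains a b y where "E a b" "y \<in> V" "f a < f y" "f y < f b"
proof -
  have "V \<noteq> {}" using assms by auto
  obtain m where "m \<in> V" and lower: "\<And>x. x \<in> V \<Longrightarrow> f m \<le> f x"
    using ex_has_least_nat[of "\<lambda>x. x \<in> V" _ f] \<open>V \<noteq> {}\<close> by blast
  obtain M where "M \<in> V" and upper: "\<And>x. x \<in> V \<Longrightarrow> f x \<le> f M"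
    using Max_in[of "f ` V"] Max_ge[of "f ` V"] finite \<open>V \<noteq> {}\<close> by fastforce
  have "card {m, M} \<le> 2" by (simp add: card_insert_le_m1)
  with assms have "\<not> V \<subseteq> {m, M}" using card_mono[of "{m, M}" V] by auto
  then obtain y where "y \<in> V" "y \<noteq> m" "y \<noteq> M" by auto
  then have "f m < f y" "f y < f M"
    using lower[of y] upper[of y] f_eq_iff \<open>m \<in> V\<close> \<open>M \<in> V\<close> by (metis le_neq_implies_less)+
  moreover have "E m M"
    using \<open>m \<in> V\<close> \<open>M \<in> V\<close> \<open>f m < f y\<close> \<open>f y < f M\<close> lower upper
    by (intro edge_if_uncrossed) (auto dest: edge_vertices)
  ultimately show thesis using that \<open>y \<in> V\<close> by blast
qed

text \<open>A vertex enclosed by an edge of minimal span sees no vertex beyond any of its neighbours,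
  since otherwise the edge to that neighbour would be a shorter enclosing edge.\<close>
lemma innermost_vertex_exists:
  assumes "card V \<ge> 3"
  obtains a w b where "a \<in> V" "w \<in> V" "b \<in> V" "f a < f w" "f w < f b"
    and "\<And>x y. E w x \<Longrightarrow> y \<in> V \<Longrightarrow> \<not> strictly_between f w y x"
proof -
  define encloses where
    "encloses = (\<lambda>(a, b). E a b \<and> (\<exists>y\<in>V. f a < f y \<and> f y < f b))"
  obtain a0 b0 y0 where "E a0 b0" "y0 \<in> V" "f a0 < f y0" "f y0 < f b0"
    using enclosing_edge_exists[OF assms] .
  then have "encloses (a0, b0)" unfolding encloses_def by auto
  from ex_has_least_nat[of encloses, OF this, of "\<lambda>(a, b). f b - f a"]
  obtain a b where "encloses (a, b)"
    and minimal: "\<And>s t. encloses (s, t) \<Longrightarrow> f b - f a \<le> f t - f s"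
    by fastforce
  then obtain w where "E a b" "w \<in> V" "f a < f w" "f w < f b"
    unfolding encloses_def by auto
  have "\<not> strictly_between f w y x" if "E w x" "y \<in> V" for x y
  proof
    assume "strictly_between f w y x"
    have "f a \<le> f x" "f x \<le> f b" using edge_from_interior[OF \<open>E a b\<close> that(1)] \<open>f a < f w\<close> \<open>f w < f b\<close> by auto
    show False
    proof (cases "f w < f x")
      case True
      then have "encloses (w, x)"
        using \<open>strictly_between f w y x\<close> that unfolding encloses_def strictly_between_def by auto
      with minimal[of w x] True \<open>f a < f w\<close> \<open>f x \<le> f b\<close> show False by arith
    next
      case False
      then have "encloses (x, w)"
        using \<open>strictly_between f w y x\<close> that edge_sym unfolding encloses_def strictly_between_def by auto
      with minimal[of x w] False \<open>f w < f b\<close> \<open>f a \<le> f x\<close> show False by arith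
    qed
  qed
  with that \<open>E a b\<close> \<open>w \<in> V\<close> \<open>f a < f w\<close> \<open>f w < f b\<close> show thesis
    using edge_vertices by blast
qed

lemma ear_exists:
  assumes "card V \<ge> 3"
  obtains w p q where "w \<in> V" "E w p" "E w q" "E p q" "\<And>x. E w x \<Longrightarrow> x = p \<or> x = q"
    and "\<And>x y. E w x \<Longrightarrow> y \<in> V \<Longrightarrow> \<not> strictly_between f w y x"
proof -
  obtain a w b where "a \<in> V" "w \<in> V" "b \<in> V" "f a < f w" "f w < f b"
    and innermost: "\<And>x y. E w x \<Longrightarrow> y \<in> V \<Longrightarrow> \<not> strictly_between f w y x"
    using innermost_vertex_exists[OF assms] by blast
  obtain p where "p \<in> V" "f p < f w" and pred: "\<And>y. y \<in> V \<Longrightarrow> f y < f w \<Longrightarrow> f y \<le> f p"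
    using ex_has_greatest_nat[of "\<lambda>y. y \<in> V \<and> f y < f w" a f "f w"] \<open>a \<in> V\<close> \<open>f a < f w\<close> by blast
  obtain q where "q \<in> V" "f w < f q" and succ: "\<And>y. y \<in> V \<Longrightarrow> f w < f y \<Longrightarrow> f q \<le> f y"
    using ex_has_least_nat[of "\<lambda>y. y \<in> V \<and> f w < f y" b f] \<open>b \<in> V\<close> \<open>f w < f b\<close> by blast
  have neighbours: "x = p \<or> x = q" if "E w x" for x
  proof -
    have "x \<in> V" "f x \<noteq> f w" using that edge_vertices edge_neq f_eq_iff \<open>w \<in> V\<close> by blast+
    then consider "f x < f w" | "f w < f x" by linarith
    then show ?thesis
    proof cases
      case 1
      then have "f x \<le> f p" using pred \<open>x \<in> V\<close> by blast
      moreover have "\<not> f x < f p"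
        using innermost[OF that \<open>p \<in> V\<close>] 1 \<open>f p < f w\<close> unfolding strictly_between_def by blast
      ultimately have "f x = f p" by simp
      then show ?thesis using f_eq_iff \<open>x \<in> V\<close> \<open>p \<in> V\<close> by blast
    next
      case 2
      then have "f q \<le> f x" using succ \<open>x \<in> V\<close> by blast
      moreover have "\<not> f q < f x"
        using innermost[OF that \<open>q \<in> V\<close>] 2 \<open>f w < f q\<close> unfolding strictly_between_def by blast
      ultimately have "f x = f q" by simp
      then show ?thesis using f_eq_iff \<open>x \<in> V\<close> \<open>q \<in> V\<close> by blast
    qed
  qed
  have "E p w"
    using \<open>p \<in> V\<close> \<open>w \<in> V\<close> \<open>f p < f w\<close> by (intro edge_if_uncrossed) (meson edge_vertices leD pred)+
  moreover have "E w q"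
    using \<open>q \<in> V\<close> \<open>w \<in> V\<close> \<open>f w < f q\<close> by (intro edge_if_uncrossed) (meson edge_vertices leD succ)+
  moreover have "E p q"
  proof (rule edge_if_uncrossed)
    fix y z assume "E y z" "f p < f y" "f y < f q"
    with pred succ edge_vertices have "y = w"
      using f_eq_iff \<open>w \<in> V\<close> by (metis leD linorder_neqE_nat)
    with \<open>E y z\<close> neighbours have "z = p \<or> z = q" by blast
    with \<open>f p < f w\<close> \<open>f w < f q\<close> show "f p \<le> f z \<and> f z \<le> f q" by auto
  qed (use \<open>p \<in> V\<close> \<open>q \<in> V\<close> \<open>f p < f w\<close> \<open>f w < f q\<close> in auto)
  ultimately show thesis
    using that \<open>w \<in> V\<close> neighbours innermost edge_sym by blast
qed

lemma remove_ear:
  assumes "w \<in> V" and ear: "\<And>x y. E w x \<Longrightarrow> y \<in> V \<Longrightarrow> \<not> strictly_between f w y x"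
  shows "maximal_outerplanar_order (V - {w}) (remove_vertex E w) f"
proof
  show "simple_graph (V - {w}) (remove_vertex E w)"
    using simple by (auto simp: simple_graph_def remove_vertex_def)
  show "inj_on f (V - {w})"
    using inj by (rule inj_on_subset) auto
  show "noncrossing (V - {w}) (remove_vertex E w) f"
    using noncrossing by (auto simp: noncrossing_def remove_vertex_def)
next
  fix u v assume "u \<in> V - {w}" "v \<in> V - {w}" "u \<noteq> v" "\<not> remove_vertex E w u v"
  then have "\<not> E u v" by (auto simp: remove_vertex_def)
  with saturated \<open>u \<in> V - {w}\<close> \<open>v \<in> V - {w}\<close> \<open>u \<noteq> v\<close> obtain a b c d
    where "a \<in> V" "b \<in> V" "c \<in> V" "d \<in> V" "add_edge E u v a b" "add_edge E u v c d"
      and order: "f a < f c" "f c < f b" "f b < f d"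
    unfolding noncrossing_def by blast
  txt \<open>Each of the two crossing chords has a vertex strictly inside, which no edge at w has.\<close>
  have "\<not> add_edge E u v x y" if "x = w \<or> y = w" "z \<in> V" "strictly_between f x z y" for x y z
    using that ear[of y z] ear[of x z] edge_sym \<open>u \<in> V - {w}\<close> \<open>v \<in> V - {w}\<close>
    unfolding add_edge_def strictly_between_def by blast
  from this[of a b c] this[of c d b] have "a \<noteq> w" "b \<noteq> w" "c \<noteq> w" "d \<noteq> w"
    using \<open>add_edge E u v a b\<close> \<open>add_edge E u v c d\<close> \<open>b \<in> V\<close> \<open>c \<in> V\<close> order
    unfolding strictly_between_def by auto
  with \<open>a \<in> V\<close> \<open>b \<in> V\<close> \<open>c \<in> V\<close> \<open>d \<in> V\<close> \<open>add_edge E u v a b\<close> \<open>add_edge E u v c d\<close> order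
  show "\<not> noncrossing (V - {w}) (add_edge (remove_vertex E w) u v) f"
    unfolding noncrossing_def add_edge_def remove_vertex_def by blast
qed

end

lemma colorful_coloring_exists:
  assumes "maximal_outerplanar_order V E f" "card V \<ge> 3"
  shows "\<exists>col. colorful_coloring V E 3 col"
  using assms
proof (induction "card V" arbitrary: V E rule: less_induct)
  case less
  then interpret maximal_outerplanar_order V E f by simp
  obtain w p q where "w \<in> V" "E w p" "E w q" "E p q" and neighbours: "\<And>x. E w x \<Longrightarrow> x = p \<or> x = q"
    and ear: "\<And>x y. E w x \<Longrightarrow> y \<in> V \<Longrightarrow> \<not> strictly_between f w y x"
    using ear_exists[OF less.prems(2)] by blast
  show ?case
  proof (cases "card V = 3")
    case True
    have "{w, p, q} \<subseteq> V" "card {w, p, q} = 3"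
      using \<open>w \<in> V\<close> \<open>E w p\<close> \<open>E w q\<close> \<open>E p q\<close> edge_vertices edge_neq by auto
    with True have "V = {w, p, q}" using finite by (metis card_subset_eq)
    with simple \<open>E w p\<close> \<open>E w q\<close> \<open>E p q\<close> show ?thesis by (simp add: colorful_coloring_triangle)
  next
    case False
    have "card (V - {w}) < card V" "card (V - {w}) \<ge> 3"
      using False less.prems(2) finite \<open>w \<in> V\<close> by (auto simp: card_Diff1_less)
    with less.hyps remove_ear[OF \<open>w \<in> V\<close> ear]
    obtain col where col: "colorful_coloring (V - {w}) (remove_vertex E w) 3 col" by blast
    have "remove_vertex E w p q"
      using \<open>E p q\<close> \<open>E w p\<close> \<open>E w q\<close> edge_neq edge_sym unfolding remove_vertex_def by blast
    then have "col p \<noteq> col q" using col unfolding colorful_coloring_def by blast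
    with simple \<open>w \<in> V\<close> \<open>E w p\<close> \<open>E w q\<close> neighbours col show ?thesis
      by (blast intro: colorful_coloring_add_ear)
  qed
qed

theorem theorem3:
  fixes V :: "'a set" and E :: "'a \<Rightarrow> 'a \<Rightarrow> bool"
  assumes "maximal_outerplanar V E"
    and "card V \<ge> 3"
  shows "fall_set V E = {3}"
proof -
  obtain f where order: "maximal_outerplanar_order V E f"
    using maximal_outerplanar_order_exists[OF assms(1)] by blast
  interpret maximal_outerplanar_order V E f by (fact order)
  obtain w p q where "w \<in> V" "E w p" "E w q" "E p q" and neighbours: "\<And>x. E w x \<Longrightarrow> x = p \<or> x = q"
    using ear_exists[OF assms(2)] by metis
  have "k = 3" if "fall_coloring V E P k" for P k
    by (rule fall_coloring_card_ear[OF that simple \<open>w \<in> V\<close> \<open>E w p\<close> \<open>E w q\<close> \<open>E p q\<close> neighbours])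
  moreover obtain col where "colorful_coloring V E 3 col"
    using colorful_coloring_exists[OF order assms(2)] by blast
  then have "fall_coloring V E ((\<lambda>i. {v \<in> V. col v = i}) ` {..<3}) 3"
    using fall_coloring_of_colorful_coloring simple \<open>w \<in> V\<close> by blast
  ultimately show ?thesis unfolding fall_set_def by blast
qed

end
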